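(* Let $W$ be a complex reflection group and $g\in W$. Suppose that the factors of some reduced reflection factorization $g=t_1\cdots t_k$ form a good generating set for some parabolic subgroup $W_X$ (that is, $\langle t_1,\dots,t_k\rangle=W_X$ and $k=\operatorname{rank}(W_X)$). Then $X=V^g$, $W_X$ is the parabolic closure $W_g$ of $g$, and $\ell_R(g)=\operatorname{codim}(V^g)$.
   Context: A complex reflection group is a finite subgroup of $\mathrm{GL}(V)$, $V$ a finite-dimensional Hermitian space, generated by unitary reflections (unitary maps whose fixed space is a hyperplane). The rank of a reflection group $G$ is $\operatorname{codim}(V^G)$ where $V^G$ is its fixed space. $\ell_R(g)$ is the minimum number of reflections whose product is $g$; a factorization achieving it is reduced. A parabolic subgroup is the pointwise stabilizer of a subset of $V$; $W_X$ denotes the pointwise stabilizer of the flat $X$ (intersection of reflection hyperplanes), and $\operatorname{rank}(W_X)=\operatorname{codim}(X)$. The parabolic closure $W_g$ is the intersection of all parabolic subgroups containing $g$; it equals $W_{V^g}$. *)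

theory Defs
  imports "HOL-Analysis.Analysis"
begin

text \<open>The Hermitian space V is complex^'n with the standard Hermitian form;
 linear maps of V are matrices of type complex^'n^'n acting by (*v).\<close>

type_synonym 'n cmat = "complex ^ 'n ^ 'n"

definition conj_transpose :: "'n::finite cmat \<Rightarrow> 'n cmat" where
  "conj_transpose A = (\<chi> i j. cnj (A $ j $ i))"

definition unitary :: "'n::finite cmat \<Rightarrow> bool" where
  "unitary A \<longleftrightarrow> conj_transpose A ** A = mat 1"

definition fix_space :: "'n::finite cmat \<Rightarrow> (complex ^ 'n) set" where
  "fix_space A = {v. A *v v = v}"

definition codim :: "(complex ^ 'n::finite) set \<Rightarrow> nat" where
  "codim X = CARD('n) - vec.dim X"

definition reflection :: "'n::finite cmat \<Rightarrow> bool" where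
  "reflection A \<longleftrightarrow> unitary A \<and> vec.dim (fix_space A) = CARD('n) - 1"

inductive_set gen_group :: "'n::finite cmat set \<Rightarrow> 'n cmat set" for S where
  gen_one: "mat 1 \<in> gen_group S"
| gen_mul: "s \<in> S \<Longrightarrow> g \<in> gen_group S \<Longrightarrow> s ** g \<in> gen_group S"
| gen_inv: "s \<in> S \<Longrightarrow> g \<in> gen_group S \<Longrightarrow> matrix_inv s ** g \<in> gen_group S"

definition refls :: "'n::finite cmat set \<Rightarrow> 'n cmat set" where
  "refls W = {t \<in> W. reflection t}"

definition cx_refl_group :: "'n::finite cmat set \<Rightarrow> bool" where
  "cx_refl_group W \<longleftrightarrow> finite W \<and> W = gen_group (refls W)"

definition group_fix :: "'n::finite cmat set \<Rightarrow> (complex ^ 'n) set" where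
  "group_fix G = {v. \<forall>g\<in>G. g *v v = v}"

definition group_rank :: "'n::finite cmat set \<Rightarrow> nat" where
  "group_rank G = codim (group_fix G)"

definition mat_prod :: "'n::finite cmat list \<Rightarrow> 'n cmat" where
  "mat_prod ts = foldr (**) ts (mat 1)"

definition refl_length :: "'n::finite cmat set \<Rightarrow> 'n cmat \<Rightarrow> nat" where
  "refl_length W g = (LEAST k. \<exists>ts. length ts = k \<and> set ts \<subseteq> refls W \<and> mat_prod ts = g)"

definition reduced_refl_factorization :: "'n::finite cmat set \<Rightarrow> 'n cmat \<Rightarrow> 'n cmat list \<Rightarrow> bool" where
  "reduced_refl_factorization W g ts \<longleftrightarrow>
     set ts \<subseteq> refls W \<and> mat_prod ts = g \<and> length ts = refl_length W g"

definition pstab :: "'n::finite cmat set \<Rightarrow> (complex ^ 'n) set \<Rightarrow> 'n cmat set" where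
  "pstab W A = {w \<in> W. \<forall>v\<in>A. w *v v = v}"

definition parabolic :: "'n::finite cmat set \<Rightarrow> 'n cmat set \<Rightarrow> bool" where
  "parabolic W P \<longleftrightarrow> (\<exists>A. P = pstab W A)"

text \<open>Flats: intersections of reflection hyperplanes (the empty intersection is V).\<close>
definition flat :: "'n::finite cmat set \<Rightarrow> (complex ^ 'n) set \<Rightarrow> bool" where
  "flat W X \<longleftrightarrow> (\<exists>T \<subseteq> refls W. X = (\<Inter>t\<in>T. fix_space t))"

definition parabolic_closure :: "'n::finite cmat set \<Rightarrow> 'n cmat \<Rightarrow> 'n cmat set" where
  "parabolic_closure W g = \<Inter>{P. parabolic W P \<and> g \<in> P}"

end

theory Submission imports Defs begin

text \<open>Let g = t1 \<cdots> tk. The reflecting hyperplanes of the ti meet in codimension at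
  most k. For two unitary maps A, B whose fixed spaces span V, every v fixed by AB satisfies
  v = Bv, because v - Bv is orthogonal to both fixed spaces; so the fixed space of AB is the
  intersection of theirs. If the hyperplanes meet in codimension exactly k, this applies at every
  stage of the product, so the fixed space of g is the intersection of the hyperplanes. For a good
  generating set of W_X that intersection is the fixed space of W_X, namely X.\<close>

definition herm :: "complex^'n::finite \<Rightarrow> complex^'n \<Rightarrow> complex" where
  "herm a b = (\<Sum>i\<in>UNIV. a$i * cnj (b$i))"

lemma herm_matrix_vector_mult_left:
  "herm (A *v y) z = herm y (conj_transpose A *v (z::complex^'n::finite))"
proof -
  have "herm (A *v y) z = (\<Sum>i\<in>UNIV. \<Sum>j\<in>UNIV. A$i$j * y$j * cnj (z$i))"
    unfolding herm_def matrix_vector_mult_def by (simp add: sum_distrib_right)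
  also have "\<dots> = (\<Sum>j\<in>UNIV. \<Sum>i\<in>UNIV. A$i$j * y$j * cnj (z$i))"
    by (rule sum.swap)
  also have "\<dots> = herm y (conj_transpose A *v z)"
    unfolding herm_def matrix_vector_mult_def conj_transpose_def
    by (simp add: sum_distrib_left mult_ac)
  finally show ?thesis .
qed

lemma herm_add_right: "herm u (a + b) = herm u a + herm u b"
  unfolding herm_def by (simp add: algebra_simps sum.distrib)

lemma herm_diff_left: "herm (a - b) u = herm a u - herm b u"
  unfolding herm_def by (simp add: algebra_simps sum_subtractf)

lemma herm_self_eq_0: "herm u u = 0 \<Longrightarrow> u = (0::complex^'n::finite)"
proof -
  assume "herm u u = 0"
  moreover have "complex_of_real (\<Sum>i\<in>UNIV. (cmod (u$i))^2) = herm u u"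
    unfolding herm_def of_real_sum by (rule sum.cong) (simp_all only: complex_norm_square)
  ultimately have "(\<Sum>i\<in>UNIV. (cmod (u$i))^2) = 0"
    by (metis of_real_eq_0_iff)
  then have "\<forall>i\<in>UNIV. (cmod (u$i))^2 = 0"
    by (subst sum_nonneg_eq_0_iff[symmetric]) auto
  then show ?thesis by (simp add: vec_eq_iff)
qed

lemma conj_transpose_mult:
  "conj_transpose (A ** B) = conj_transpose B ** conj_transpose (A::'n::finite cmat)"
  unfolding conj_transpose_def matrix_matrix_mult_def by (simp add: vec_eq_iff mult_ac)

lemma unitary_mat_1: "unitary (mat 1 :: 'n::finite cmat)"
proof -
  have "conj_transpose (mat 1 :: 'n cmat) = mat 1"
    unfolding conj_transpose_def mat_def by (simp add: vec_eq_iff)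
  then show ?thesis by (simp add: unitary_def)
qed

lemma unitary_mult: "unitary A \<Longrightarrow> unitary B \<Longrightarrow> unitary (A ** B)"
  unfolding unitary_def conj_transpose_mult
  by (metis matrix_mul_assoc matrix_mul_lid)

lemma unitary_mat_prod: "\<forall>t\<in>set ts. unitary t \<Longrightarrow> unitary (mat_prod ts)"
  by (induction ts) (simp_all add: mat_prod_def unitary_mat_1 unitary_mult)

lemma unitary_imp_invertible: "unitary A \<Longrightarrow> invertible A"
  unfolding unitary_def invertible_left_inverse by blast

lemma matrix_inv_mult_left: "invertible (A::'n::finite cmat) \<Longrightarrow> matrix_inv A ** A = mat 1"
  unfolding invertible_def matrix_inv_def by (rule someI2_ex) auto

lemma unitary_displacement_orthogonal_fix_space:
  assumes "unitary A" "x \<in> fix_space A"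
  shows "herm (A *v y - y) x = 0"
proof -
  have "herm (A *v y) x = herm (A *v y) (A *v x)"
    using assms(2) by (simp add: fix_space_def)
  also have "\<dots> = herm y ((conj_transpose A ** A) *v x)"
    by (simp add: herm_matrix_vector_mult_left matrix_vector_mul_assoc)
  also have "\<dots> = herm y x"
    using assms(1) by (simp add: unitary_def)
  finally show ?thesis by (simp add: herm_diff_left)
qed

lemma subspace_fix_space: "vec.subspace (fix_space A)"
  unfolding vec.subspace_def fix_space_def
  by (auto simp: matrix_vector_right_distrib vec.scale)

lemma fix_space_mult_superset: "fix_space A \<inter> fix_space B \<subseteq> fix_space (A ** B)"
  by (auto simp: fix_space_def matrix_vector_mul_assoc[symmetric])

lemma fix_space_mult_unitary:
  assumes "unitary A" "unitary B"
    and spans: "{x + y |x y. x \<in> fix_space A \<and> y \<in> fix_space B} = UNIV"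
  shows "fix_space (A ** B) = fix_space A \<inter> fix_space (B::'n::finite cmat)"
proof
  show "fix_space (A ** B) \<subseteq> fix_space A \<inter> fix_space B"
  proof
    fix v assume "v \<in> fix_space (A ** B)"
    then have ABv: "A *v (B *v v) = v"
      by (simp add: fix_space_def matrix_vector_mul_assoc)
    define u where "u = v - B *v v"
    have "herm u x = 0" if "x \<in> fix_space A" for x
      using unitary_displacement_orthogonal_fix_space[OF assms(1) that, of "B *v v"] ABv
      by (simp add: u_def)
    moreover have "herm u x = 0" if "x \<in> fix_space B" for x
      using unitary_displacement_orthogonal_fix_space[OF assms(2) that, of v]
      by (simp add: u_def herm_diff_left)
    moreover obtain a b where "u = a + b" "a \<in> fix_space A" "b \<in> fix_space B"
      using spans by blast
    ultimately have "herm u u = 0"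
      by (simp add: herm_add_right)
    then have "u = 0"
      by (rule herm_self_eq_0)
    then have "B *v v = v"
      by (simp add: u_def)
    with ABv show "v \<in> fix_space A \<inter> fix_space B"
      by (simp add: fix_space_def)
  qed
qed (rule fix_space_mult_superset)

lemma dim_le_CARD: "vec.dim (S::(complex^'n::finite) set) \<le> CARD('n)"
  using vec.dim_subset_UNIV[of S] by (simp add: vec.dimension_def card_cart_basis)

lemma subspace_eq_UNIV_if_dim_eq_CARD:
  assumes "vec.subspace (S::(complex^'n::finite) set)" "vec.dim S = CARD('n)"
  shows "S = UNIV"
  using assms vec.dim_eq_full[of S] vec.span_eq_iff[of S]
  by (simp add: vec.dimension_def card_cart_basis)

definition common_fix_space :: "'n::finite cmat list \<Rightarrow> (complex^'n) set" where
  "common_fix_space ts = (\<Inter>t\<in>set ts. fix_space t)"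

lemma common_fix_space_Nil [simp]: "common_fix_space [] = UNIV"
  by (simp add: common_fix_space_def)

lemma common_fix_space_Cons [simp]:
  "common_fix_space (t # ts) = fix_space t \<inter> common_fix_space ts"
  by (simp add: common_fix_space_def)

lemma subspace_common_fix_space: "vec.subspace (common_fix_space ts)"
  unfolding common_fix_space_def by (rule vec.subspace_Int) (rule subspace_fix_space)

lemma mat_prod_Cons: "mat_prod (t # ts) = t ** mat_prod ts"
  by (simp add: mat_prod_def)

lemma codim_common_fix_space_le_length:
  assumes "\<forall>t\<in>set ts. reflection t"
  shows "CARD('n) \<le> vec.dim (common_fix_space ts) + length (ts::'n::finite cmat list)"
  using assms
proof (induction ts)
  case (Cons t ts)
  have "vec.dim (fix_space t) = CARD('n) - 1"
    using Cons.prems by (simp add: reflection_def)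
  moreover note vec.dim_sums_Int[OF subspace_fix_space[of t] subspace_common_fix_space[of ts]]
  moreover have "vec.dim {x + y |x y. x \<in> fix_space t \<and> y \<in> common_fix_space ts} \<le> CARD('n)"
    by (rule dim_le_CARD)
  moreover have "CARD('n) \<le> vec.dim (common_fix_space ts) + length ts"
    using Cons by simp
  ultimately show ?case
    by simp
qed (simp add: card_cart_basis)

lemma fix_space_mat_prod_reflections:
  assumes "\<forall>t\<in>set ts. reflection t" "length ts \<le> CARD('n)"
    and "vec.dim (common_fix_space ts) = CARD('n) - length ts"
  shows "fix_space (mat_prod ts) = common_fix_space (ts :: 'n::finite cmat list)"
  using assms
proof (induction ts)
  case Nil
  then show ?case by (simp add: mat_prod_def fix_space_def)
next
  case (Cons t ts)
  let ?S = "{x + y |x y. x \<in> fix_space t \<and> y \<in> common_fix_space ts}"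
  have "vec.dim (fix_space t) = CARD('n) - 1"
    using Cons.prems by (simp add: reflection_def)
  moreover have "CARD('n) \<le> vec.dim (common_fix_space ts) + length ts"
    using Cons.prems(1) by (simp add: codim_common_fix_space_le_length)
  moreover note vec.dim_sums_Int[OF subspace_fix_space[of t] subspace_common_fix_space[of ts]]
  moreover have "vec.dim ?S \<le> CARD('n)"
    by (rule dim_le_CARD)
  ultimately have dim_ts: "vec.dim (common_fix_space ts) = CARD('n) - length ts"
    and "vec.dim ?S = CARD('n)"
    using Cons.prems(2,3) by auto
  then have spans: "?S = UNIV"
    by (intro subspace_eq_UNIV_if_dim_eq_CARD vec.subspace_sums subspace_fix_space
        subspace_common_fix_space)
  have IH: "fix_space (mat_prod ts) = common_fix_space ts"
    using Cons dim_ts by simp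
  have "unitary t" "unitary (mat_prod ts)"
    using Cons.prems(1) by (auto simp: reflection_def intro: unitary_mat_prod)
  then have "fix_space (t ** mat_prod ts) = fix_space t \<inter> fix_space (mat_prod ts)"
    using spans IH by (intro fix_space_mult_unitary) simp_all
  then show ?case
    using IH by (simp add: mat_prod_Cons)
qed

lemma group_fix_gen_group:
  assumes "\<forall>s\<in>S. invertible s"
  shows "group_fix (gen_group S) = (\<Inter>s\<in>S. fix_space s)"
proof
  show "group_fix (gen_group S) \<subseteq> (\<Inter>s\<in>S. fix_space s)"
    using gen_mul[OF _ gen_one, of _ S] by (auto simp: group_fix_def fix_space_def)
  show "(\<Inter>s\<in>S. fix_space s) \<subseteq> group_fix (gen_group S)"
  proof
    fix v assume "v \<in> (\<Inter>s\<in>S. fix_space s)"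
    then have fixed: "s *v v = v" if "s \<in> S" for s
      using that by (simp add: fix_space_def)
    have "h *v v = v" if "h \<in> gen_group S" for h
      using that
    proof (induction rule: gen_group.induct)
      case (gen_mul s g)
      then show ?case using fixed by (simp add: matrix_vector_mul_assoc[symmetric])
    next
      case (gen_inv s g)
      have "matrix_inv s *v v = matrix_inv s *v (s *v v)"
        using fixed[OF gen_inv(1)] by simp
      also have "\<dots> = v"
        using assms gen_inv(1) matrix_inv_mult_left[of s]
        by (simp add: matrix_vector_mul_assoc)
      finally show ?case
        using gen_inv by (simp add: matrix_vector_mul_assoc[symmetric])
    qed simp
    then show "v \<in> group_fix (gen_group S)"
      by (simp add: group_fix_def)
  qed
qed

lemma group_fix_pstab_flat:
  assumes "flat W X"
  shows "group_fix (pstab W X) = X"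
proof
  obtain T where T: "T \<subseteq> refls W" "X = (\<Inter>t\<in>T. fix_space t)"
    using assms unfolding flat_def by blast
  then have "T \<subseteq> pstab W X"
    by (auto simp: pstab_def refls_def fix_space_def)
  then show "group_fix (pstab W X) \<subseteq> X"
    using T(2) by (auto simp: group_fix_def fix_space_def)
qed (auto simp: group_fix_def pstab_def)

lemma parabolic_closure_eq_pstab_fix_space:
  assumes "g \<in> W"
  shows "parabolic_closure W g = pstab W (fix_space g)"
proof
  show "parabolic_closure W g \<subseteq> pstab W (fix_space g)"
    using assms unfolding parabolic_closure_def parabolic_def
    by (auto simp: pstab_def fix_space_def)
  show "pstab W (fix_space g) \<subseteq> parabolic_closure W g"
    unfolding parabolic_closure_def parabolic_def
    by (auto simp: pstab_def fix_space_def)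
qed

theorem mainTheorem4:
  fixes W :: "'n::finite cmat set" and g :: "'n cmat" and ts :: "'n cmat list"
    and X :: "(complex ^ 'n) set"
  assumes "cx_refl_group W"
    and "g \<in> W"
    and "reduced_refl_factorization W g ts"
    and "flat W X"
    and "gen_group (set ts) = pstab W X"
    and "length ts = group_rank (pstab W X)"
  shows "X = fix_space g \<and> pstab W X = parabolic_closure W g
         \<and> refl_length W g = codim (fix_space g)"
proof -
  have refl_ts: "\<forall>t\<in>set ts. reflection t" and g_prod: "mat_prod ts = g"
    and len_ts: "length ts = refl_length W g"
    using assms(3) by (auto simp: reduced_refl_factorization_def refls_def)
  have "X = group_fix (pstab W X)"
    using group_fix_pstab_flat[OF assms(4)] by simp
  also have "\<dots> = common_fix_space ts"
    using assms(5) group_fix_gen_group[of "set ts"] refl_ts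
    by (simp add: common_fix_space_def reflection_def unitary_imp_invertible)
  finally have X_eq: "X = common_fix_space ts" .
  have len_codim: "length ts = CARD('n) - vec.dim X"
    using assms(6) group_fix_pstab_flat[OF assms(4)] by (simp add: group_rank_def codim_def)
  have "vec.dim (common_fix_space ts) = CARD('n) - length ts"
    using len_codim X_eq dim_le_CARD[of X] by simp
  then have "fix_space (mat_prod ts) = common_fix_space ts"
    using len_codim by (intro fix_space_mat_prod_reflections[OF refl_ts]) simp_all
  then have fix_g: "fix_space g = X"
    using g_prod X_eq by simp
  have "refl_length W g = codim (fix_space g)"
    unfolding fix_g codim_def using len_ts len_codim by simp
  then show ?thesis
    using fix_g parabolic_closure_eq_pstab_fix_space[OF assms(2)] by simp
qed

end
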